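(* Let $1\le k\le n$, let $\mathcal{G}_{k-1}$ be a nearest-neighbor graph of a storage network with node set $\mathcal{N}$ and RTT function $\tau$, and let $\mathcal{H}$ be its extended graph. An uncoded storage scheme admissible on $\mathcal{G}_{k-1}$ exists if and only if the chromatic number of $\mathcal{H}$ satisfies $\chi(\mathcal{H})=k$.
   Context: A storage network consists of $n$ nodes $\mathcal{N}=\{1,\dots,n\}$ and a round-trip-time (RTT) function $\tau:\mathcal{N}\times\mathcal{N}\to\mathbb{R}_{\ge 0}$, symmetric with $\tau(i,i)=0$, and $k\le n$ information files $W_1,\dots,W_k$. An uncoded storage scheme stores at each node $i$ one file $X_i=W_{\sigma(i)}$ for a map $\sigma:\mathcal{N}\to[k]$. For node $i$, $\lambda_0^{(i)}\le\dots\le\lambda_{n-1}^{(i)}$ is the sorted list of $\{\tau(j,i):j\in\mathcal{N}\}$. A nearest-neighbor graph $\mathcal{G}_{k-1}$ is a directed graph on $\mathcal{N}$ in which each node $i$ has incoming edges from exactly $k-1$ other nodes whose RTTs to $i$ are the $k-1$ smallest values $\lambda_1^{(i)},\dots,\lambda_{k-1}^{(i)}$ (ties broken arbitrarily); these $k-1$ nodes are called the neighbors of $i$ (a node reached only by an outgoing edge of $i$ is not a neighbor of $i$). An uncoded scheme is admissible on $\mathcal{G}_{k-1}$ if for every node $i$ and every $j\in[k]$, some node in $\{i\}\cup\{\text{neighbors of } i\}$ stores $W_j$. The extended graph $\mathcal{H}$ of $\mathcal{G}_{k-1}$ is the undirected graph on $\mathcal{N}$ in which two distinct nodes are adjacent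 iff they are joined by a directed edge (in either direction) in $\mathcal{G}_{k-1}$, or they are both neighbors of a common node in $\mathcal{G}_{k-1}$. *)

theory Defs
  imports Complex_Main "HOL-Library.Multiset"
begin

text \<open>The nearest-neighbor graph G_{k-1} is represented by the neighbor map nb:
  nb i is the set of the k-1 nodes having incoming edges into i.\<close>

definition sorted_rtts :: "nat \<Rightarrow> (nat \<Rightarrow> nat \<Rightarrow> real) \<Rightarrow> nat \<Rightarrow> real list" where
  "sorted_rtts n tau i = sort (map (\<lambda>j. tau j i) [1..<Suc n])"

definition is_nn_graph :: "nat \<Rightarrow> (nat \<Rightarrow> nat \<Rightarrow> real) \<Rightarrow> nat \<Rightarrow> (nat \<Rightarrow> nat set) \<Rightarrow> bool" where
  "is_nn_graph n tau k nb \<longleftrightarrow>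
     (\<forall>i\<in>{1..n}. nb i \<subseteq> {1..n} - {i} \<and> card (nb i) = k - 1 \<and>
        image_mset (\<lambda>j. tau j i) (mset_set (nb i))
          = mset (take (k - 1) (drop 1 (sorted_rtts n tau i))))"

definition admissible :: "nat \<Rightarrow> nat \<Rightarrow> (nat \<Rightarrow> nat set) \<Rightarrow> (nat \<Rightarrow> nat) \<Rightarrow> bool" where
  "admissible n k nb \<sigma> \<longleftrightarrow>
     (\<forall>i\<in>{1..n}. \<sigma> i \<in> {1..k}) \<and>
     (\<forall>i\<in>{1..n}. \<forall>j\<in>{1..k}. \<exists>m\<in>insert i (nb i). \<sigma> m = j)"

definition ext_adj :: "nat \<Rightarrow> (nat \<Rightarrow> nat set) \<Rightarrow> nat \<Rightarrow> nat \<Rightarrow> bool" where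
  "ext_adj n nb u v \<longleftrightarrow> u \<in> {1..n} \<and> v \<in> {1..n} \<and> u \<noteq> v \<and>
     (u \<in> nb v \<or> v \<in> nb u \<or> (\<exists>w\<in>{1..n}. u \<in> nb w \<and> v \<in> nb w))"

definition colorable :: "nat set \<Rightarrow> (nat \<Rightarrow> nat \<Rightarrow> bool) \<Rightarrow> nat \<Rightarrow> bool" where
  "colorable V E c \<longleftrightarrow> (\<exists>f. (\<forall>v\<in>V. f v < c) \<and> (\<forall>u\<in>V. \<forall>v\<in>V. E u v \<longrightarrow> f u \<noteq> f v))"

definition chromatic_number :: "nat set \<Rightarrow> (nat \<Rightarrow> nat \<Rightarrow> bool) \<Rightarrow> nat" where
  "chromatic_number V E = (LEAST c. colorable V E c)"

end

theory Submission
  imports Defs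
begin

text \<open>Every closed neighbourhood \<open>{i} \<union> nb i\<close> has exactly \<open>k\<close> nodes, and two distinct nodes are
  adjacent in \<open>\<H>\<close> exactly when they lie in a common closed neighbourhood. So a map is an
  admissible scheme iff it is injective on every closed neighbourhood, i.e. iff (shifted by one)
  it is a proper \<open>k\<close>-colouring of \<open>\<H>\<close>; and since the closed neighbourhoods are \<open>k\<close>-cliques,
  no colouring uses fewer than \<open>k\<close> colours. The RTT values play no role beyond fixing \<open>nb\<close>.\<close>

lemma image_eq_iff_inj_on_if_card_eq:
  assumes "finite A" and "finite B" and "card A = card B"
  shows "f ` A = B \<longleftrightarrow> inj_on f A \<and> f ` A \<subseteq> B"
proof
  assume image: "f ` A = B"
  then have "card (f ` A) = card A" using assms(3) by simp
  then show "inj_on f A \<and> f ` A \<subseteq> B" using eq_card_imp_inj_on[OF assms(1)] image by blast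
next
  assume "inj_on f A \<and> f ` A \<subseteq> B"
  moreover from this have "card (f ` A) = card B" using assms(3) by (simp add: card_image)
  ultimately show "f ` A = B" using card_subset_eq[OF assms(2)] by blast
qed

lemma card_clique_le_if_colorable:
  assumes "colorable V E c" and "K \<subseteq> V" and "finite K"
    and "\<And>u v. u \<in> K \<Longrightarrow> v \<in> K \<Longrightarrow> u \<noteq> v \<Longrightarrow> E u v"
  shows "card K \<le> c"
proof -
  obtain f where bound: "\<forall>v\<in>V. f v < c" and proper: "\<forall>u\<in>V. \<forall>v\<in>V. E u v \<longrightarrow> f u \<noteq> f v"
    using assms(1) unfolding colorable_def by blast
  have "inj_on f K"
  proof (rule inj_onI, rule ccontr)
    fix u v assume "u \<in> K" "v \<in> K" "f u = f v" "u \<noteq> v"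
    then show False using assms(2,4) proper by (meson subsetD)
  qed
  then have "card K = card (f ` K)" by (simp add: card_image)
  also have "\<dots> \<le> card {..<c}"
    using assms(2) bound by (intro card_mono) auto
  finally show ?thesis by simp
qed

lemma colorable_atLeastAtMost_self:
  assumes "\<And>u. \<not> E u u"
  shows "colorable {1..n} E n"
  unfolding colorable_def
proof (intro exI[of _ "\<lambda>v. v - 1"] conjI ballI impI)
  fix v assume "v \<in> {1..n}"
  then show "v - 1 < n" by auto
next
  fix u v assume "u \<in> {1..n}" "v \<in> {1..n}" "E u v"
  moreover from \<open>E u v\<close> have "u \<noteq> v" using assms by blast
  ultimately show "u - 1 \<noteq> v - 1" by auto
qed

lemma chromatic_number_eq_iff_colorable:
  assumes "colorable V E c" and "\<And>c. colorable V E c \<Longrightarrow> k \<le> c"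
  shows "chromatic_number V E = k \<longleftrightarrow> colorable V E k"
  unfolding chromatic_number_def
proof
  assume "(LEAST c. colorable V E c) = k"
  with LeastI[of "colorable V E", OF assms(1)] show "colorable V E k" by simp
next
  assume "colorable V E k"
  then show "(LEAST c. colorable V E c) = k" by (rule Least_equality) (rule assms(2))
qed

lemma ext_adj_iff_common_closed_nbhd:
  "ext_adj n nb u v \<longleftrightarrow> u \<in> {1..n} \<and> v \<in> {1..n} \<and> u \<noteq> v \<and>
     (\<exists>w\<in>{1..n}. u \<in> insert w (nb w) \<and> v \<in> insert w (nb w))"
  unfolding ext_adj_def by blast

lemma proper_iff_inj_on_closed_nbhds:
  assumes "\<forall>i\<in>{1..n}. nb i \<subseteq> {1..n}"
  shows "(\<forall>u\<in>{1..n}. \<forall>v\<in>{1..n}. ext_adj n nb u v \<longrightarrow> f u \<noteq> f v) \<longleftrightarrow>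
         (\<forall>i\<in>{1..n}. inj_on f (insert i (nb i)))"
  using assms unfolding ext_adj_iff_common_closed_nbhd inj_on_def by blast

lemma is_nn_graph_closed_nbhd:
  assumes "is_nn_graph n tau k nb" and "1 \<le> k" and "i \<in> {1..n}"
  shows "insert i (nb i) \<subseteq> {1..n}" and "card (insert i (nb i)) = k"
proof -
  have sub: "nb i \<subseteq> {1..n} - {i}" and card: "card (nb i) = k - 1"
    using assms(1,3) unfolding is_nn_graph_def by auto
  then show "insert i (nb i) \<subseteq> {1..n}" using assms(3) by blast
  have "finite (nb i)" and "i \<notin> nb i" using sub finite_subset by auto
  then show "card (insert i (nb i)) = k" using card assms(2) by simp
qed

lemma admissible_iff_inj_on_closed_nbhds:
  assumes nn: "is_nn_graph n tau k nb" and "1 \<le> k"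
  shows "admissible n k nb \<sigma> \<longleftrightarrow>
         (\<forall>i\<in>{1..n}. \<sigma> i \<in> {1..k}) \<and> (\<forall>i\<in>{1..n}. inj_on \<sigma> (insert i (nb i)))"
proof -
  note nbhd = is_nn_graph_closed_nbhd[OF nn \<open>1 \<le> k\<close>]
  have range_iff: "(\<forall>i\<in>{1..n}. \<sigma> i \<in> {1..k}) \<longleftrightarrow> (\<forall>i\<in>{1..n}. \<sigma> ` insert i (nb i) \<subseteq> {1..k})"
    using nbhd(1) unfolding image_subset_iff by (meson insertI1 subsetD)
  have cover_iff: "(\<forall>j\<in>{1..k}. \<exists>m\<in>insert i (nb i). \<sigma> m = j) \<longleftrightarrow> {1..k} \<subseteq> \<sigma> ` insert i (nb i)"
    for i by (auto simp: image_iff)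
  have onto_iff: "\<sigma> ` insert i (nb i) \<subseteq> {1..k} \<and> {1..k} \<subseteq> \<sigma> ` insert i (nb i) \<longleftrightarrow>
      inj_on \<sigma> (insert i (nb i)) \<and> \<sigma> ` insert i (nb i) \<subseteq> {1..k}"
    if "i \<in> {1..n}" for i
  proof -
    have fin: "finite (insert i (nb i))" by (rule finite_subset[OF nbhd(1)[OF that]]) simp
    have card: "card (insert i (nb i)) = card {1..k}" using nbhd(2)[OF that] by simp
    show ?thesis
      using image_eq_iff_inj_on_if_card_eq[OF fin finite_atLeastAtMost card, where f = \<sigma>]
      by (simp only: set_eq_subset)
  qed
  have "admissible n k nb \<sigma> \<longleftrightarrow>
      (\<forall>i\<in>{1..n}. \<sigma> ` insert i (nb i) \<subseteq> {1..k} \<and> {1..k} \<subseteq> \<sigma> ` insert i (nb i))"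
    unfolding admissible_def range_iff cover_iff ball_conj_distrib ..
  also have "\<dots> \<longleftrightarrow> (\<forall>i\<in>{1..n}. inj_on \<sigma> (insert i (nb i)) \<and> \<sigma> ` insert i (nb i) \<subseteq> {1..k})"
    using onto_iff by (rule ball_cong[OF refl])
  finally show ?thesis
    unfolding range_iff ball_conj_distrib by (simp only: conj_commute)
qed

lemma ex_admissible_iff_colorable:
  assumes nn: "is_nn_graph n tau k nb" and "1 \<le> k"
  shows "(\<exists>\<sigma>. admissible n k nb \<sigma>) \<longleftrightarrow> colorable {1..n} (ext_adj n nb) k"
proof -
  note closed_sub = is_nn_graph_closed_nbhd(1)[OF nn \<open>1 \<le> k\<close>]
  then have nb_sub: "\<forall>i\<in>{1..n}. nb i \<subseteq> {1..n}" by blast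
  note proper = proper_iff_inj_on_closed_nbhds[OF nb_sub]
  note adm = admissible_iff_inj_on_closed_nbhds[OF nn \<open>1 \<le> k\<close>]
  show ?thesis
  proof
    assume "\<exists>\<sigma>. admissible n k nb \<sigma>"
    then obtain \<sigma> where range: "\<forall>i\<in>{1..n}. \<sigma> i \<in> {1..k}"
      and inj: "\<forall>i\<in>{1..n}. inj_on \<sigma> (insert i (nb i))"
      using adm by blast
    have inj': "\<forall>i\<in>{1..n}. inj_on (\<lambda>v. \<sigma> v - 1) (insert i (nb i))"
    proof (intro ballI inj_onI)
      fix i u v assume i: "i \<in> {1..n}" and u: "u \<in> insert i (nb i)" and v: "v \<in> insert i (nb i)"
        and eq: "\<sigma> u - 1 = \<sigma> v - 1"
      have "u \<in> {1..n}" and "v \<in> {1..n}" using u v closed_sub[OF i] by auto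
      then have "1 \<le> \<sigma> u" and "1 \<le> \<sigma> v" using range by auto
      then have "\<sigma> u = \<sigma> v" using eq by arith
      then show "u = v" using inj i u v by (meson inj_onD)
    qed
    have range': "\<forall>v\<in>{1..n}. \<sigma> v - 1 < k" using range by auto
    show "colorable {1..n} (ext_adj n nb) k"
      unfolding colorable_def proper by (rule exI[of _ "\<lambda>v. \<sigma> v - 1"]) (rule conjI[OF range' inj'])
  next
    assume "colorable {1..n} (ext_adj n nb) k"
    then obtain f where range: "\<forall>v\<in>{1..n}. f v < k"
      and proper_f: "\<forall>u\<in>{1..n}. \<forall>v\<in>{1..n}. ext_adj n nb u v \<longrightarrow> f u \<noteq> f v"
      unfolding colorable_def by blast
    have inj: "\<forall>i\<in>{1..n}. inj_on f (insert i (nb i))" using proper_f unfolding proper .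
    have "\<forall>i\<in>{1..n}. Suc (f i) \<in> {1..k}" using range by (simp add: Suc_leI)
    moreover have "\<forall>i\<in>{1..n}. inj_on (\<lambda>v. Suc (f v)) (insert i (nb i))"
    proof
      fix i assume "i \<in> {1..n}"
      then have "inj_on f (insert i (nb i))" using inj by blast
      then show "inj_on (\<lambda>v. Suc (f v)) (insert i (nb i))"
        unfolding inj_on_def by simp
    qed
    ultimately have "admissible n k nb (\<lambda>v. Suc (f v))" unfolding adm ..
    then show "\<exists>\<sigma>. admissible n k nb \<sigma>" by blast
  qed
qed

theorem theorem1:
  fixes n k :: nat and tau :: "nat \<Rightarrow> nat \<Rightarrow> real" and nb :: "nat \<Rightarrow> nat set"
  assumes "1 \<le> k" and "k \<le> n"
    and "\<forall>i\<in>{1..n}. \<forall>j\<in>{1..n}. tau i j = tau j i"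
    and "\<forall>i\<in>{1..n}. \<forall>j\<in>{1..n}. tau i j \<ge> 0"
    and "\<forall>i\<in>{1..n}. tau i i = 0"
    and "is_nn_graph n tau k nb"
  shows "(\<exists>\<sigma>. admissible n k nb \<sigma>) \<longleftrightarrow> chromatic_number {1..n} (ext_adj n nb) = k"
proof -
  have node: "1 \<in> {1..n}" using assms(1,2) by simp
  note nbhd = is_nn_graph_closed_nbhd[OF assms(6,1) node]
  have clique: "ext_adj n nb u v"
    if "u \<in> insert 1 (nb 1)" "v \<in> insert 1 (nb 1)" "u \<noteq> v" for u v
    using that nbhd(1) node unfolding ext_adj_iff_common_closed_nbhd by blast
  have finite_nbhd: "finite (insert 1 (nb 1))" by (rule finite_subset[OF nbhd(1)]) simp
  have "colorable {1..n} (ext_adj n nb) n"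
    by (rule colorable_atLeastAtMost_self) (simp add: ext_adj_def)
  moreover have "k \<le> c" if "colorable {1..n} (ext_adj n nb) c" for c
    using card_clique_le_if_colorable[OF that nbhd(1) finite_nbhd clique] nbhd(2) by simp
  ultimately have "chromatic_number {1..n} (ext_adj n nb) = k \<longleftrightarrow> colorable {1..n} (ext_adj n nb) k"
    by (rule chromatic_number_eq_iff_colorable)
  then show ?thesis using ex_admissible_iff_colorable[OF assms(6,1)] by simp
qed

end
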